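(* Let $f:[0,\infty)\to[0,\infty)$ be continuously differentiable with $f>0$ on $[t_0,\infty)$ for some $t_0\ge0$ and $f\in C^2([t_0,\infty))$, let $g=\log f$ on $[t_0,\infty)$, and assume condition (H1) of the context with $q=1$. Let $(t_n),(x_n)\subset(0,\infty)$ and $x_0\in[0,\infty)$ satisfy $t_n\to\infty$ and $x_n\to x_0$. Then $$\lim_{n\to\infty}\frac{g\big(t_n-x_n\frac{g(t_n)}{g'(t_n)}\big)}{g(t_n)}=e^{-x_0}=\lim_{n\to\infty}\frac{g'\big(t_n-x_n\frac{g(t_n)}{g'(t_n)}\big)}{g'(t_n)}.$$
   Context: Condition (H1): (i) $g'(t)>0$ and $g''(t)>0$ for all $t\ge t_0$, and there is a pair $(q,p)$ with either $q=1$ and $p\in(0,\infty]$, or $q\in(1,\infty)$ and $p\in(0,\infty)$, such that $\lim_{t\to\infty}\frac{g'(t)^2}{g(t)g''(t)}=q$ and $\lim_{t\to\infty}\frac{tg'(t)}{g(t)}=p$; (ii) if $q=1$, then $tg'(t)/g(t)$ is nondecreasing on $[t_0,\infty)$ and there exist $k\in\mathbb{N}$ and $\hat g\in C^2([t_0,\infty))$ with $f=\exp_k\circ\hat g$ and $\hat g'/\hat g$ nonincreasing on $[t_0,\infty)$ ($\exp_1=\exp$, $\exp_k=\exp_{k-1}\circ\exp$). *)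

theory Defs
  imports Complex_Main
begin

definition iexp :: "nat \<Rightarrow> real \<Rightarrow> real" where
  "iexp k = (exp ^^ k)"

end

theory Submission
  imports Defs "HOL-Analysis.Analysis"
begin

(* With u = g/g', the hypothesis q = 1 says that u' = 1 - g g''/g'^2 tends to 0. Hence u(s) = o(s),
   so tau_n = t_n - x_n u(t_n) tends to infinity, and the mean value theorem applied to u gives
   u(eta_n)/u(t_n) -> 1 for any eta_n in [tau_n, t_n]. The mean value theorem applied to ln g on
   [tau_n, t_n] gives ln g(t_n) - ln g(tau_n) = x_n u(t_n)/u(eta_n) -> x_0, and
   g'(tau_n)/g'(t_n) = (g(tau_n)/g(t_n)) / (u(tau_n)/u(t_n)). *)

lemma MVT_le:
  fixes f f' :: "real \<Rightarrow> real"
  assumes "a \<le> b"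
    and "\<And>s. a \<le> s \<Longrightarrow> s \<le> b \<Longrightarrow> (f has_real_derivative f' s) (at s)"
  shows "\<exists>z. a \<le> z \<and> z \<le> b \<and> f b - f a = (b - a) * f' z"
proof -
  have "\<exists>z\<in>{a..b}. f b - f a = f' z * (b - a)"
    by (rule mvt_very_simple[OF assms(1), of f "\<lambda>z. (*) (f' z)"])
      (use assms(2) in \<open>auto simp: has_field_derivative_def intro: has_derivative_at_withinI\<close>)
  then show ?thesis
    by (auto simp: mult.commute)
qed

lemma eventually_MVT_at_top:
  fixes f f' :: "real \<Rightarrow> real"
  assumes "\<forall>\<^sub>F s in at_top. (f has_real_derivative f' s) (at s)"
  shows "\<forall>\<^sub>F a in at_top. \<forall>b\<ge>a. \<exists>z. a \<le> z \<and> z \<le> b \<and> f b - f a = (b - a) * f' z"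
proof -
  obtain T where "\<And>s. s \<ge> T \<Longrightarrow> (f has_real_derivative f' s) (at s)"
    using assms by (auto simp: eventually_at_top_linorder)
  then have "\<forall>a\<ge>T. \<forall>b\<ge>a. \<exists>z. a \<le> z \<and> z \<le> b \<and> f b - f a = (b - a) * f' z"
    by (auto intro!: MVT_le)
  then show ?thesis
    unfolding eventually_at_top_linorder by blast
qed

lemma div_self_tendsto_0_of_deriv_tendsto_0:
  fixes u u' :: "real \<Rightarrow> real"
  assumes "\<forall>\<^sub>F s in at_top. (u has_real_derivative u' s) (at s)"
    and "(u' \<longlongrightarrow> 0) at_top"
  shows "((\<lambda>s. u s / s) \<longlongrightarrow> 0) at_top"
  by (rule lhospital_at_top_at_top[where g' = "\<lambda>_. 1"])
    (use assms in \<open>auto intro: filterlim_ident DERIV_ident\<close>)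

lemma filterlim_at_top_minus_mult:
  fixes u :: "real \<Rightarrow> real" and t x :: "'a \<Rightarrow> real"
  assumes u: "((\<lambda>s. u s / s) \<longlongrightarrow> 0) at_top"
    and t: "filterlim t at_top F" and x: "(x \<longlongrightarrow> x0) F"
  shows "filterlim (\<lambda>n. t n - x n * u (t n)) at_top F"
proof -
  have "((\<lambda>n. 1 - x n * (u (t n) / t n)) \<longlongrightarrow> 1 - x0 * 0) F"
    by (intro tendsto_intros x filterlim_compose[OF u t])
  then have "filterlim (\<lambda>n. (1 - x n * (u (t n) / t n)) * t n) at_top F"
    by (intro filterlim_tendsto_pos_mult_at_top t) auto
  moreover have "\<forall>\<^sub>F n in F. (1 - x n * (u (t n) / t n)) * t n = t n - x n * u (t n)"
    using filterlim_at_top_dense[THEN iffD1, OF t, rule_format, of 0]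
    by eventually_elim (simp add: field_simps)
  ultimately show ?thesis
    using filterlim_cong by fastforce
qed

lemma ratio_tendsto_1_of_deriv_tendsto_0:
  fixes u u' :: "real \<Rightarrow> real" and t x \<eta> :: "'a \<Rightarrow> real"
  assumes du: "\<forall>\<^sub>F s in at_top. (u has_real_derivative u' s) (at s)"
    and u'_0: "(u' \<longlongrightarrow> 0) at_top"
    and u_pos: "\<forall>\<^sub>F s in at_top. u s > 0"
    and t: "filterlim t at_top F" and x: "(x \<longlongrightarrow> x0) F"
    and \<eta>: "\<forall>\<^sub>F n in F. t n - x n * u (t n) \<le> \<eta> n \<and> \<eta> n \<le> t n"
  shows "((\<lambda>n. u (\<eta> n) / u (t n)) \<longlongrightarrow> 1) F"
proof -
  have "filterlim (\<lambda>n. t n - x n * u (t n)) at_top F"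
    by (rule filterlim_at_top_minus_mult[OF div_self_tendsto_0_of_deriv_tendsto_0[OF du u'_0] t x])
  then have \<eta>_lim: "filterlim \<eta> at_top F"
    by (rule filterlim_at_top_mono) (use \<eta> in \<open>eventually_elim, simp\<close>)
  have "\<forall>\<^sub>F n in F. \<exists>z. \<eta> n \<le> z \<and> z \<le> t n \<and> u (t n) - u (\<eta> n) = (t n - \<eta> n) * u' z"
    using eventually_compose_filterlim[OF eventually_MVT_at_top[OF du] \<eta>_lim] \<eta>
    by eventually_elim blast
  then obtain \<xi> where \<xi>: "\<forall>\<^sub>F n in F.
      \<eta> n \<le> \<xi> n \<and> \<xi> n \<le> t n \<and> u (t n) - u (\<eta> n) = (t n - \<eta> n) * u' (\<xi> n)"
    by (auto simp: eventually_ex)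
  have ev: "\<forall>\<^sub>F n in F. u (t n) > 0 \<and> t n - x n * u (t n) \<le> \<eta> n \<and> \<eta> n \<le> t n"
    using eventually_compose_filterlim[OF u_pos t] \<eta> by eventually_elim simp
  have "filterlim \<xi> at_top F"
    by (rule filterlim_at_top_mono[OF \<eta>_lim]) (use \<xi> in \<open>eventually_elim, simp\<close>)
  then have bound_0: "((\<lambda>n. \<bar>x n\<bar> * \<bar>u' (\<xi> n)\<bar>) \<longlongrightarrow> 0) F"
    using tendsto_mult[OF tendsto_rabs[OF x] tendsto_rabs[OF filterlim_compose[OF u'_0]]] by simp
  have "((\<lambda>n. (t n - \<eta> n) / u (t n) * u' (\<xi> n)) \<longlongrightarrow> 0) F"
  proof (rule Lim_null_comparison[OF _ bound_0])
    show "\<forall>\<^sub>F n in F. norm ((t n - \<eta> n) / u (t n) * u' (\<xi> n)) \<le> \<bar>x n\<bar> * \<bar>u' (\<xi> n)\<bar>"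
      using ev
    proof eventually_elim
      case (elim n)
      then have "0 \<le> (t n - \<eta> n) / u (t n)" "(t n - \<eta> n) / u (t n) \<le> x n"
        by (auto simp: pos_divide_le_eq)
      then have "\<bar>(t n - \<eta> n) / u (t n)\<bar> * \<bar>u' (\<xi> n)\<bar> \<le> \<bar>x n\<bar> * \<bar>u' (\<xi> n)\<bar>"
        by (intro mult_right_mono) auto
      then show ?case
        by (simp only: real_norm_def abs_mult)
    qed
  qed
  then have "((\<lambda>n. 1 - (t n - \<eta> n) / u (t n) * u' (\<xi> n)) \<longlongrightarrow> 1) F"
    using tendsto_diff[OF tendsto_const] by fastforce
  moreover have "\<forall>\<^sub>F n in F. 1 - (t n - \<eta> n) / u (t n) * u' (\<xi> n) = u (\<eta> n) / u (t n)"
    using ev \<xi> by eventually_elim (simp add: field_simps)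
  ultimately show ?thesis
    using filterlim_cong by fastforce
qed

(* The limits proved below are de Haan's Gamma-variation property of g with auxiliary function g/g',
   whose derivative 1 - g g''/g'^2 tends to 0 by the last assumption. *)
locale gamma_varying =
  fixes g g1 g2 :: "real \<Rightarrow> real"
  assumes g_deriv: "\<forall>\<^sub>F s in at_top. (g has_real_derivative g1 s) (at s)"
    and g1_deriv: "\<forall>\<^sub>F s in at_top. (g1 has_real_derivative g2 s) (at s)"
    and g1_pos: "\<forall>\<^sub>F s in at_top. g1 s > 0"
    and g2_pos: "\<forall>\<^sub>F s in at_top. g2 s > 0"
    and deriv_ratio: "((\<lambda>s. (g1 s)\<^sup>2 / (g s * g2 s)) \<longlongrightarrow> 1) at_top"
begin

lemma eventually_pos: "\<forall>\<^sub>F s in at_top. g s > 0"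
proof -
  have "\<forall>\<^sub>F s in at_top. (g1 s)\<^sup>2 / (g s * g2 s) > 0"
    using order_tendstoD(1)[OF deriv_ratio, of 0] by simp
  with g2_pos show ?thesis
    by eventually_elim (auto simp: zero_less_divide_iff zero_less_mult_iff)
qed

lemma g_div_g1_pos: "\<forall>\<^sub>F s in at_top. g s / g1 s > 0"
  using eventually_pos g1_pos by eventually_elim simp

lemma g_div_g1_has_derivative:
  "\<forall>\<^sub>F s in at_top. ((\<lambda>s. g s / g1 s) has_real_derivative 1 - g s * g2 s / (g1 s)\<^sup>2) (at s)"
  using g_deriv g1_deriv g1_pos
proof eventually_elim
  case (elim s)
  then show ?case
    by (auto intro!: derivative_eq_intros simp: field_simps power2_eq_square)
qed

lemma g_div_g1_deriv_tendsto_0: "((\<lambda>s. 1 - g s * g2 s / (g1 s)\<^sup>2) \<longlongrightarrow> 0) at_top"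
proof -
  have "((\<lambda>s. 1 - 1 / ((g1 s)\<^sup>2 / (g s * g2 s))) \<longlongrightarrow> 1 - 1 / 1) at_top"
    by (intro tendsto_intros deriv_ratio) simp
  then show ?thesis
    by simp
qed

lemma ln_g_has_derivative: "\<forall>\<^sub>F s in at_top. ((\<lambda>s. ln (g s)) has_real_derivative g1 s / g s) (at s)"
  using g_deriv eventually_pos by eventually_elim (auto intro!: derivative_eq_intros)

lemma filterlim_shift_at_top:
  fixes t x :: "'a \<Rightarrow> real"
  assumes "filterlim t at_top F" and "(x \<longlongrightarrow> x0) F"
  shows "filterlim (\<lambda>n. t n - x n * (g (t n) / g1 (t n))) at_top F"
  by (rule filterlim_at_top_minus_mult[OF div_self_tendsto_0_of_deriv_tendsto_0
        [OF g_div_g1_has_derivative g_div_g1_deriv_tendsto_0] assms])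

lemma eventually_shift_le:
  fixes t x :: "'a \<Rightarrow> real"
  assumes "filterlim t at_top F" and "\<forall>\<^sub>F n in F. x n \<ge> 0"
  shows "\<forall>\<^sub>F n in F. t n - x n * (g (t n) / g1 (t n)) \<le> t n"
  using eventually_compose_filterlim[OF g_div_g1_pos assms(1)] assms(2)
proof eventually_elim
  case (elim n)
  then have "0 \<le> x n * (g (t n) / g1 (t n))"
    by (intro mult_nonneg_nonneg) auto
  then show ?case
    by linarith
qed

lemma g_div_g1_ratio_tendsto_1:
  fixes t x \<eta> :: "'a \<Rightarrow> real"
  assumes "filterlim t at_top F" and "(x \<longlongrightarrow> x0) F"
    and "\<forall>\<^sub>F n in F. t n - x n * (g (t n) / g1 (t n)) \<le> \<eta> n \<and> \<eta> n \<le> t n"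
  shows "((\<lambda>n. (g (\<eta> n) / g1 (\<eta> n)) / (g (t n) / g1 (t n))) \<longlongrightarrow> 1) F"
  using ratio_tendsto_1_of_deriv_tendsto_0[OF g_div_g1_has_derivative g_div_g1_deriv_tendsto_0 g_div_g1_pos assms]
  by simp

lemma shifted_tendsto_exp:
  fixes t x :: "'a \<Rightarrow> real"
  assumes t: "filterlim t at_top F" and x: "(x \<longlongrightarrow> x0) F"
    and x_nonneg: "\<forall>\<^sub>F n in F. x n \<ge> 0"
  shows "((\<lambda>n. g (t n - x n * g (t n) / g1 (t n)) / g (t n)) \<longlongrightarrow> exp (- x0)) F"
proof -
  define \<tau> where "\<tau> n = t n - x n * (g (t n) / g1 (t n))" for n
  have \<tau>_lim: "filterlim \<tau> at_top F"
    unfolding \<tau>_def by (rule filterlim_shift_at_top[OF t x])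
  have ev: "\<forall>\<^sub>F n in F. \<tau> n \<le> t n \<and> g (\<tau> n) > 0 \<and> g (t n) > 0"
    using eventually_shift_le[OF t x_nonneg, folded \<tau>_def]
      eventually_compose_filterlim[OF eventually_pos \<tau>_lim] eventually_compose_filterlim[OF eventually_pos t]
    by eventually_elim simp
  have "\<forall>\<^sub>F n in F. \<exists>z. \<tau> n \<le> z \<and> z \<le> t n \<and>
      ln (g (t n)) - ln (g (\<tau> n)) = (t n - \<tau> n) * (g1 z / g z)"
    using eventually_compose_filterlim[OF eventually_MVT_at_top[OF ln_g_has_derivative] \<tau>_lim] ev
    by eventually_elim blast
  then obtain \<eta> where \<eta>: "\<forall>\<^sub>F n in F. \<tau> n \<le> \<eta> n \<and> \<eta> n \<le> t n \<and>
      ln (g (t n)) - ln (g (\<tau> n)) = (t n - \<tau> n) * (g1 (\<eta> n) / g (\<eta> n))"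
    by (auto simp: eventually_ex)
  have "((\<lambda>n. (g (\<eta> n) / g1 (\<eta> n)) / (g (t n) / g1 (t n))) \<longlongrightarrow> 1) F"
    by (rule g_div_g1_ratio_tendsto_1[OF t x]) (use \<eta> in \<open>eventually_elim, simp add: \<tau>_def\<close>)
  then have "((\<lambda>n. exp (- (x n / ((g (\<eta> n) / g1 (\<eta> n)) / (g (t n) / g1 (t n))))))
      \<longlongrightarrow> exp (- (x0 / 1))) F"
    by (intro tendsto_intros x) simp_all
  moreover have "\<forall>\<^sub>F n in F.
      exp (- (x n / ((g (\<eta> n) / g1 (\<eta> n)) / (g (t n) / g1 (t n))))) = g (\<tau> n) / g (t n)"
    using ev \<eta>
  proof eventually_elim
    case (elim n)
    have "x n / ((g (\<eta> n) / g1 (\<eta> n)) / (g (t n) / g1 (t n)))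
        = (t n - \<tau> n) * (g1 (\<eta> n) / g (\<eta> n))"
      by (simp add: \<tau>_def divide_inverse mult_ac)
    with elim have "- (x n / ((g (\<eta> n) / g1 (\<eta> n)) / (g (t n) / g1 (t n))))
        = ln (g (\<tau> n)) - ln (g (t n))"
      by linarith
    then show ?case
      using elim by (simp add: exp_diff)
  qed
  ultimately show ?thesis
    using filterlim_cong by (fastforce simp: \<tau>_def)
qed

lemma shifted_deriv_tendsto_exp:
  fixes t x :: "'a \<Rightarrow> real"
  assumes t: "filterlim t at_top F" and x: "(x \<longlongrightarrow> x0) F"
    and x_nonneg: "\<forall>\<^sub>F n in F. x n \<ge> 0"
  shows "((\<lambda>n. g1 (t n - x n * g (t n) / g1 (t n)) / g1 (t n)) \<longlongrightarrow> exp (- x0)) F"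
proof -
  define \<tau> where "\<tau> n = t n - x n * (g (t n) / g1 (t n))" for n
  have \<tau>_lim: "filterlim \<tau> at_top F"
    unfolding \<tau>_def by (rule filterlim_shift_at_top[OF t x])
  have "((\<lambda>n. g (\<tau> n) / g (t n) / ((g (\<tau> n) / g1 (\<tau> n)) / (g (t n) / g1 (t n))))
      \<longlongrightarrow> exp (- x0) / 1) F"
    using shifted_tendsto_exp[OF t x x_nonneg]
    by (intro tendsto_intros g_div_g1_ratio_tendsto_1[OF t x])
      (use eventually_shift_le[OF t x_nonneg] in \<open>simp_all add: \<tau>_def\<close>)
  moreover have "\<forall>\<^sub>F n in F.
      g (\<tau> n) / g (t n) / ((g (\<tau> n) / g1 (\<tau> n)) / (g (t n) / g1 (t n))) = g1 (\<tau> n) / g1 (t n)"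
    using eventually_compose_filterlim[OF eventually_pos \<tau>_lim] eventually_compose_filterlim[OF eventually_pos t]
    by eventually_elim simp
  ultimately show ?thesis
    using filterlim_cong by (fastforce simp: \<tau>_def)
qed

end

theorem lemma2p9:
  fixes f f1 f2 g g1 g2 :: "real \<Rightarrow> real"
    and t0 :: real and t x :: "nat \<Rightarrow> real" and x0 :: real
  assumes t0: "t0 \<ge> 0"
    and f_nonneg: "\<forall>s\<ge>0. f s \<ge> 0"
    and f_C1: "\<forall>s\<ge>0. (f has_real_derivative f1 s) (at s within {0..})"
    and f1_cont: "continuous_on {0..} f1"
    and f_pos: "\<forall>s\<ge>t0. f s > 0"
    and f_C2: "\<forall>s\<ge>t0. (f1 has_real_derivative f2 s) (at s within {t0..})"
    and f2_cont: "continuous_on {t0..} f2"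
    and g_def: "g = (\<lambda>s. ln (f s))"
    and g_d1: "\<forall>s\<ge>t0. (g has_real_derivative g1 s) (at s within {t0..})"
    and g_d2: "\<forall>s\<ge>t0. (g1 has_real_derivative g2 s) (at s within {t0..})"
    and H1_pos: "\<forall>s\<ge>t0. g1 s > 0 \<and> g2 s > 0"
    and H1_q: "((\<lambda>s. (g1 s)\<^sup>2 / (g s * g2 s)) \<longlongrightarrow> 1) at_top"
    and H1_p: "(\<exists>p>0. ((\<lambda>s. s * g1 s / g s) \<longlongrightarrow> p) at_top)
               \<or> filterlim (\<lambda>s. s * g1 s / g s) at_top at_top"
    and H1_mono: "mono_on {t0..} (\<lambda>s. s * g1 s / g s)"
    and H1_ghat: "\<exists>k::nat. k \<ge> 1 \<and> (\<exists>gh h1 h2 :: real \<Rightarrow> real.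
                    (\<forall>s\<ge>t0. (gh has_real_derivative h1 s) (at s within {t0..}))
                  \<and> (\<forall>s\<ge>t0. (h1 has_real_derivative h2 s) (at s within {t0..}))
                  \<and> continuous_on {t0..} h2
                  \<and> (\<forall>s\<ge>t0. f s = iexp k (gh s))
                  \<and> antimono_on {t0..} (\<lambda>s. h1 s / gh s))"
    and t_pos: "\<forall>n. t n > 0" and x_pos: "\<forall>n. x n > 0" and x0: "x0 \<ge> 0"
    and t_lim: "filterlim t at_top sequentially"
    and x_lim: "x \<longlonglongrightarrow> x0"
  shows "(\<lambda>n. g (t n - x n * g (t n) / g1 (t n)) / g (t n)) \<longlonglongrightarrow> exp (- x0)
       \<and> (\<lambda>n. g1 (t n - x n * g (t n) / g1 (t n)) / g1 (t n)) \<longlonglongrightarrow> exp (- x0)"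
proof -
  have at_within: "at s within {t0..} = at s" if "s > t0" for s
    by (rule at_within_interior) (use that in simp)
  have large: "\<forall>\<^sub>F s in at_top. s > t0"
    by (rule eventually_gt_at_top)
  interpret gamma_varying g g1 g2
  proof
    show "\<forall>\<^sub>F s in at_top. (g has_real_derivative g1 s) (at s)"
      using large by eventually_elim (metis g_d1 at_within less_imp_le)
    show "\<forall>\<^sub>F s in at_top. (g1 has_real_derivative g2 s) (at s)"
      using large by eventually_elim (metis g_d2 at_within less_imp_le)
    show "\<forall>\<^sub>F s in at_top. g1 s > 0" "\<forall>\<^sub>F s in at_top. g2 s > 0"
      using large by (eventually_elim, simp add: H1_pos)+
  qed (fact H1_q)
  have "\<forall>\<^sub>F n in sequentially. x n \<ge> 0"
    using x_pos by (simp add: less_imp_le)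
  then show ?thesis
    using shifted_tendsto_exp[OF t_lim x_lim] shifted_deriv_tendsto_exp[OF t_lim x_lim] by blast
qed

end
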